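(* Fix $s,z>0$ and define $$c_{s,z}=\min\Big\{\Big|1-\frac{s}{z}\Big|,1\Big\},\qquad t_{s,z}=(1+c_{s,z})s,$$ $$g_{s,z}(a)=\begin{cases}\max\{z-a,\min\{s-z,z\}\}&a\le s\\ 0&a>s,\end{cases}\qquad h_{s,z}(a)=\begin{cases}z& a\le c_{s,z}s\\ \frac{z}{s}\big(s-(a-c_{s,z}s)\big)& a>c_{s,z}s.\end{cases}$$ Then (i) $\displaystyle\int_0^{t_{s,z}}\frac{da}{1-\rho_Z(g_{s,z}(a))}=\mathbb{E}[T^{\mathrm{res}}_{\mathrm{SRPT\text{-}B}}(s,z)]+c_{s,z}s$; (ii) $\displaystyle\int_0^{t_{s,z}}\frac{da}{1-\rho_Z(h_{s,z}(a))}=\mathbb{E}[T^{\mathrm{res}}_{\mathrm{SRPT\text{-}SE}}(s,z)]+c_{s,z}\,\mathbb{E}[T^{\mathrm{res}}_{\mathrm{PSJF\text{-}E}}(s,z)]$; (iii) $g_{s,z}(a)\le h_{s,z}(a)$ for all $a\in(0,t_{s,z})$.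
   Context: Model: M/G/1 queue (Poisson arrivals of rate $\lambda$, single preemptive server of rate 1) in which each job has i.i.d. (true size, estimated size) pair distributed as $(S,Z)$ with a joint density; $0<\rho=\lambda\mathbb{E}[S]<1$. $\rho_Z(x)=\lambda\mathbb{E}[S\mathbf{1}(Z\le x)]$ (so $\rho_Z(x)=0$ for $x\le0$). Policies are defined by rank functions on states $(s,z,a)$ (age $a$), the job of least rank being served: SRPT-B: $\min\{|z-a|,z\}$; SRPT-SE: $\frac{z}{s}(s-a)$; PSJF-E: $z$. Worst future rank: $w_\pi(s,z,a)=\sup_{b\in[a,s)}r_\pi(s,z,b)$. Residence time of a tagged job is the time from its first service to its completion; $T^{\mathrm{res}}_\pi(s,z)$ is the residence time under $\pi$ of a tagged job with true size $s$ and estimated size $z$ arriving in steady state. Known fact (cited, may be used): for $\pi\in\{\text{SRPT-B},\text{SRPT-SE},\text{PSJF-E}\}$, $\mathbb{E}[T^{\mathrm{res}}_\pi(s,z)]=\int_0^s\frac{da}{1-\rho_Z(w_\pi(s,z,a))}$. *)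

theory Defs
  imports "HOL-Analysis.Analysis"
begin

datatype policy = SRPT_B | SRPT_SE | PSJF_E

text \<open>Rank functions on states (s, z, a): true size, estimated size, age.\<close>
fun rank :: "policy \<Rightarrow> real \<Rightarrow> real \<Rightarrow> real \<Rightarrow> real" where
  "rank SRPT_B s z a = min \<bar>z - a\<bar> z"
| "rank SRPT_SE s z a = z / s * (s - a)"
| "rank PSJF_E s z a = z"

definition worst_rank :: "policy \<Rightarrow> real \<Rightarrow> real \<Rightarrow> real \<Rightarrow> real" where
  "worst_rank p s z a = (SUP b\<in>{a..<s}. rank p s z b)"

text \<open>rho_Z(x) = lambda * E[S 1(Z \<le> x)] for a joint density f of (S, Z) on lborel (real x real).\<close>
definition rhoZ :: "real \<Rightarrow> (real \<times> real \<Rightarrow> real) \<Rightarrow> real \<Rightarrow> real" where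
  "rhoZ lam f x = lam * (\<integral>p. fst p * (if snd p \<le> x then 1 else 0) * f p \<partial>lborel)"

definition c_sz :: "real \<Rightarrow> real \<Rightarrow> real" where
  "c_sz s z = min \<bar>1 - s / z\<bar> 1"

definition t_sz :: "real \<Rightarrow> real \<Rightarrow> real" where
  "t_sz s z = (1 + c_sz s z) * s"

definition g_sz :: "real \<Rightarrow> real \<Rightarrow> real \<Rightarrow> real" where
  "g_sz s z a = (if a \<le> s then max (z - a) (min (s - z) z) else 0)"

definition h_sz :: "real \<Rightarrow> real \<Rightarrow> real \<Rightarrow> real" where
  "h_sz s z a = (if a \<le> c_sz s z * s then z
                 else z / s * (s - (a - c_sz s z * s)))"

end

theory Submission
  imports Defs
begin

text \<open>On [0, s) the worst future rank of SRPT-B is exactly g, and g vanishes on (s, t],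
  where the integrand is 1 because rho_Z(0) = 0; this gives (i). The function h is the constant
  PSJF-E rank z on [0, c s] followed by the SRPT-SE worst future rank shifted by c s, which
  gives (ii). Both identities hold for every nondecreasing transform F of the rank, here
  F(x) = 1 / (1 - rho_Z(x)); integrability comes from g and h being antitone.\<close>

lemma worst_rank_PSJF_E: "a < s \<Longrightarrow> worst_rank PSJF_E s z a = z"
  unfolding worst_rank_def by simp

lemma worst_rank_SRPT_SE:
  assumes "a < s" "s > 0" "z > 0"
  shows "worst_rank SRPT_SE s z a = z / s * (s - a)"
  unfolding worst_rank_def
proof (rule cSup_eq_maximum)
  show "z / s * (s - a) \<in> rank SRPT_SE s z ` {a..<s}"
    using assms by force
  show "y \<le> z / s * (s - a)" if "y \<in> rank SRPT_SE s z ` {a..<s}" for y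
    using assms that by (auto intro!: divide_right_mono mult_left_mono)
qed

lemma worst_rank_SRPT_B:
  assumes "0 \<le> a" "a < s" "z > 0"
  shows "worst_rank SRPT_B s z a = max (z - a) (min (s - z) z)"
  unfolding worst_rank_def
proof (rule cSup_eq_non_empty)
  show "rank SRPT_B s z ` {a..<s} \<noteq> {}"
    using assms by auto
  show "x \<le> max (z - a) (min (s - z) z)" if "x \<in> rank SRPT_B s z ` {a..<s}" for x
    using assms that by auto
  fix y assume "\<And>x. x \<in> rank SRPT_B s z ` {a..<s} \<Longrightarrow> x \<le> y"
  then have ub: "min \<bar>z - b\<bar> z \<le> y" if "a \<le> b" "b < s" for b
    using that by force
  show "max (z - a) (min (s - z) z) \<le> y"
  proof (cases "min (s - z) z \<le> z - a")
    case True
    then show ?thesis using ub[of a] assms by auto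
  next
    case False
    show ?thesis
    proof (rule ccontr)
      assume "\<not> ?thesis"
      then have y_lt: "y < min (s - z) z" and "z < s"
        using False assms by auto
      \<comment> \<open>a rank strictly above y is attained just beyond z, at the midpoint level\<close>
      define b where "b = max a (z + (max y 0 + min (s - z) z) / 2)"
      have "a \<le> b" "b < s" "y < min \<bar>z - b\<bar> z"
        using y_lt \<open>z < s\<close> assms unfolding b_def by (auto simp: max_def min_def field_simps)
      then show False using ub by force
    qed
  qed
qed

lemma c_sz_nonneg: "0 \<le> c_sz s z"
  unfolding c_sz_def by simp

lemma t_sz_eq: "t_sz s z = c_sz s z * s + s"
  unfolding t_sz_def by (simp add: algebra_simps)

lemma g_sz_antitone:
  assumes "z > 0" "a \<le> b"
  shows "g_sz s z b \<le> g_sz s z a"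
  using assms unfolding g_sz_def by (auto simp: max_def min_def)

lemma h_sz_antitone:
  assumes "s > 0" "z > 0" "a \<le> b"
  shows "h_sz s z b \<le> h_sz s z a"
proof (cases "b \<le> c_sz s z * s")
  case True
  then show ?thesis using assms unfolding h_sz_def by auto
next
  case False
  have "z / s * (s - (b - c_sz s z * s)) \<le> z / s * (s - (max a (c_sz s z * s) - c_sz s z * s))"
    using False assms by (intro mult_left_mono) auto
  then show ?thesis
    using False assms unfolding h_sz_def by (auto simp: max_def)
qed

lemma c_sz_scaled:
  assumes "s > 0" "z > 0"
  shows "z * c_sz s z = min \<bar>z - s\<bar> z"
  using assms unfolding c_sz_def by (auto simp: abs_if min_def field_simps)

lemma g_sz_le_h_sz:
  assumes "s > 0" "z > 0" "0 < a" "a < t_sz s z"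
  shows "g_sz s z a \<le> h_sz s z a"
proof (cases "a \<le> c_sz s z * s")
  case True
  then show ?thesis
    using assms unfolding g_sz_def h_sz_def by (auto simp: max_def min_def)
next
  case False
  have h_eq: "h_sz s z a = z / s * (s - (a - c_sz s z * s))"
    using False unfolding h_sz_def by simp
  then have h_split: "h_sz s z a = z / s * (s - a) + min \<bar>z - s\<bar> z"
    using assms c_sz_scaled[of s z] by (simp add: field_simps)
  have "0 < h_sz s z a"
    using assms unfolding h_eq t_sz_eq by simp
  moreover have "z - a \<le> h_sz s z a" "min (s - z) z \<le> h_sz s z a" if "a \<le> s"
  proof -
    have "0 \<le> z / s * (s - a)"
      using that assms by simp
    then show "min (s - z) z \<le> h_sz s z a"
      using \<open>0 < h_sz s z a\<close> unfolding h_split by (auto simp: abs_if min_def)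
    show "z - a \<le> h_sz s z a"
    proof (cases "z \<le> s")
      case True
      have "z - a \<le> z / s * (s - a)"
        using True assms mult_right_mono[of z s a] by (simp add: field_simps)
      then show ?thesis
        using assms unfolding h_split by simp
    next
      case False
      have "s - a \<le> z / s * (s - a)"
        using False that assms mult_right_mono[of 1 "z / s" "s - a"] by simp
      then show ?thesis
        using False assms unfolding h_split by simp
    qed
  qed
  ultimately show ?thesis
    unfolding g_sz_def by auto
qed

lemma integrable_on_mono_comp_antitone:
  fixes F g :: "real \<Rightarrow> real"
  assumes "mono F" and "\<And>a b. a \<le> b \<Longrightarrow> g b \<le> g a"
  shows "(\<lambda>a. F (g a)) integrable_on {x..y}"
proof -
  have "mono_on {x..y} (\<lambda>a. - F (g a))"
    using assms by (intro mono_onI) (simp add: monoD)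
  then have "(\<lambda>a. - F (g a)) integrable_on {x..y}"
    by (rule integrable_on_mono_on)
  then show ?thesis
    using integrable_neg by fastforce
qed

lemma integral_g_sz:
  fixes F :: "real \<Rightarrow> real"
  assumes "mono F" "F 0 = 1" "s > 0" "z > 0"
  shows "integral {0..t_sz s z} (\<lambda>a. F (g_sz s z a))
       = integral {0..s} (\<lambda>a. F (worst_rank SRPT_B s z a)) + c_sz s z * s"
proof -
  have "s \<le> t_sz s z"
    using assms c_sz_nonneg[of s z] unfolding t_sz_eq by simp
  have integrable: "(\<lambda>a. F (g_sz s z a)) integrable_on {0..t_sz s z}"
    using assms by (intro integrable_on_mono_comp_antitone g_sz_antitone)
  have "integral {0..t_sz s z} (\<lambda>a. F (g_sz s z a))
      = integral {0..s} (\<lambda>a. F (g_sz s z a)) + integral {s..t_sz s z} (\<lambda>a. F (g_sz s z a))"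
    using Henstock_Kurzweil_Integration.integral_combine[OF _ \<open>s \<le> t_sz s z\<close> integrable] assms
    by simp
  also have "\<dots> = integral {0..s} (\<lambda>a. F (worst_rank SRPT_B s z a)) + integral {s..t_sz s z} (\<lambda>a. 1)"
  proof (intro arg_cong2[where f = "(+)"] integral_spike[of "{s}"])
    show "F (worst_rank SRPT_B s z a) = F (g_sz s z a)" if "a \<in> {0..s} - {s}" for a
      using that assms by (simp add: g_sz_def worst_rank_SRPT_B)
    show "1 = F (g_sz s z a)" if "a \<in> {s..t_sz s z} - {s}" for a
      using that assms by (simp add: g_sz_def)
  qed auto
  also have "\<dots> = integral {0..s} (\<lambda>a. F (worst_rank SRPT_B s z a)) + c_sz s z * s"
    using \<open>s \<le> t_sz s z\<close> by (simp add: t_sz_eq)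
  finally show ?thesis .
qed

lemma integral_h_sz:
  fixes F :: "real \<Rightarrow> real"
  assumes "mono F" "s > 0" "z > 0"
  shows "integral {0..t_sz s z} (\<lambda>a. F (h_sz s z a))
       = integral {0..s} (\<lambda>a. F (worst_rank SRPT_SE s z a))
         + c_sz s z * integral {0..s} (\<lambda>a. F (worst_rank PSJF_E s z a))"
proof -
  define c where "c = c_sz s z"
  have "0 \<le> c * s" "c * s \<le> t_sz s z"
    using assms c_sz_nonneg[of s z] unfolding c_def t_sz_eq by simp_all
  have integrable: "(\<lambda>a. F (h_sz s z a)) integrable_on {0..t_sz s z}"
    using assms by (intro integrable_on_mono_comp_antitone h_sz_antitone)
  have "integral {0..t_sz s z} (\<lambda>a. F (h_sz s z a))
      = integral {0..c * s} (\<lambda>a. F (h_sz s z a)) + integral {c * s..t_sz s z} (\<lambda>a. F (h_sz s z a))"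
    using Henstock_Kurzweil_Integration.integral_combine[OF \<open>0 \<le> c * s\<close> \<open>c * s \<le> t_sz s z\<close> integrable]
    by simp
  also have "integral {0..c * s} (\<lambda>a. F (h_sz s z a)) = integral {0..c * s} (\<lambda>a. F z)"
    by (rule integral_cong) (auto simp: h_sz_def c_def)
  also have "integral {c * s..t_sz s z} (\<lambda>a. F (h_sz s z a))
      = integral {0..s} ((\<lambda>a. F (h_sz s z a)) \<circ> (+) (c * s))"
    using integral_shift_Icc_real[of 0 s "\<lambda>a. F (h_sz s z a)" "c * s"]
    by (simp add: t_sz_eq c_def add.commute)
  also have "\<dots> = integral {0..s} (\<lambda>a. F (worst_rank SRPT_SE s z a))"
    by (rule integral_spike[of "{s}"])
      (use assms in \<open>auto simp: h_sz_def c_def worst_rank_SRPT_SE\<close>)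
  also have "integral {0..c * s} (\<lambda>a. F z) = c * integral {0..s} (\<lambda>a. F z)"
    using \<open>0 \<le> c * s\<close> assms by simp
  also have "integral {0..s} (\<lambda>a. F z) = integral {0..s} (\<lambda>a. F (worst_rank PSJF_E s z a))"
    by (rule integral_spike[of "{s}"]) (auto simp: worst_rank_PSJF_E)
  finally show ?thesis
    unfolding c_def by simp
qed

lemma rhoZ_integrand_integrable:
  assumes "f \<in> borel_measurable lborel" "integrable lborel (\<lambda>p. fst p * f p)"
  shows "integrable lborel (\<lambda>p::real \<times> real. fst p * (if snd p \<le> x then 1 else 0) * f p)"
proof (rule Bochner_Integration.integrable_bound[OF assms(2)])
  have [measurable]: "f \<in> borel_measurable borel"
      "fst \<in> borel_measurable (borel :: (real \<times> real) measure)"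
      "snd \<in> borel_measurable (borel :: (real \<times> real) measure)"
    using assms(1) by (simp_all add: borel_measurable_continuous_onI continuous_on_fst
        continuous_on_snd continuous_on_id)
  show "(\<lambda>p::real \<times> real. fst p * (if snd p \<le> x then 1 else 0) * f p) \<in> borel_measurable lborel"
    by simp measurable
  show "AE p in lborel. norm (fst p * (if snd p \<le> x then 1 else 0) * f p) \<le> norm (fst p * f p)"
    by (auto simp: abs_mult)
qed

lemma rhoZ_mono:
  assumes "f \<in> borel_measurable lborel" "integrable lborel (\<lambda>p. fst p * f p)"
    and "\<And>p. 0 \<le> fst p * f p" "0 \<le> lam" "x \<le> y"
  shows "rhoZ lam f x \<le> rhoZ lam f y"
  unfolding rhoZ_def
  using assms
  by (intro mult_left_mono integral_mono rhoZ_integrand_integrable) auto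

lemma rhoZ_le_load:
  assumes "f \<in> borel_measurable lborel" "integrable lborel (\<lambda>p. fst p * f p)"
    and "\<And>p. 0 \<le> fst p * f p" "0 \<le> lam"
  shows "rhoZ lam f x \<le> lam * (\<integral>p. fst p * f p \<partial>lborel)"
  unfolding rhoZ_def
  using assms
  by (intro mult_left_mono integral_mono rhoZ_integrand_integrable) auto

lemma rhoZ_zero:
  assumes "\<And>u v. f (u, v) \<noteq> 0 \<Longrightarrow> v > 0"
  shows "rhoZ lam f 0 = 0"
proof -
  have "(\<lambda>p::real \<times> real. fst p * (if snd p \<le> 0 then 1 else 0) * f p) = (\<lambda>p. 0)"
    using assms by (force simp: fun_eq_iff)
  then show ?thesis
    unfolding rhoZ_def by simp
qed

lemma mono_one_div_one_minus:
  fixes R :: "real \<Rightarrow> real"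
  assumes "mono R" "\<And>x. R x < 1"
  shows "mono (\<lambda>x. 1 / (1 - R x))"
  using assms by (intro monoI divide_left_mono) (auto simp: monoD intro: mult_pos_pos)

theorem mainTheorem6:
  fixes lam :: real and f :: "real \<times> real \<Rightarrow> real"
    and ETres :: "policy \<Rightarrow> real \<Rightarrow> real \<Rightarrow> real"
    and s z :: real
  assumes f_meas: "f \<in> borel_measurable lborel"
    and f_nonneg: "\<And>p. f p \<ge> 0"
    and f_int: "integrable lborel f"
    and f_prob: "(\<integral>p. f p \<partial>lborel) = 1"
    and f_supp: "\<And>u v. f (u, v) \<noteq> 0 \<Longrightarrow> u > 0 \<and> v > 0"
    and S_int: "integrable lborel (\<lambda>p. fst p * f p)"
    and lam_pos: "lam > 0"
    and rho_pos: "0 < lam * (\<integral>p. fst p * f p \<partial>lborel)"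
    and rho_lt1: "lam * (\<integral>p. fst p * f p \<partial>lborel) < 1"
    and known: "\<And>p s' z'. s' > 0 \<Longrightarrow> z' > 0 \<Longrightarrow>
        ETres p s' z' = integral {0..s'} (\<lambda>a. 1 / (1 - rhoZ lam f (worst_rank p s' z' a)))"
    and s_pos: "s > 0" and z_pos: "z > 0"
  shows "integral {0..t_sz s z} (\<lambda>a. 1 / (1 - rhoZ lam f (g_sz s z a)))
           = ETres SRPT_B s z + c_sz s z * s
     \<and> integral {0..t_sz s z} (\<lambda>a. 1 / (1 - rhoZ lam f (h_sz s z a)))
           = ETres SRPT_SE s z + c_sz s z * ETres PSJF_E s z
     \<and> (\<forall>a\<in>{0<..<t_sz s z}. g_sz s z a \<le> h_sz s z a)"
proof -
  define F where "F x = 1 / (1 - rhoZ lam f x)" for x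
  have S_nonneg: "0 \<le> fst p * f p" for p
    using f_supp[of "fst p" "snd p"] f_nonneg[of p] by (cases "f p = 0") auto
  have "mono (rhoZ lam f)"
    using f_meas S_int S_nonneg lam_pos by (intro monoI rhoZ_mono) auto
  moreover have "rhoZ lam f x < 1" for x
    using rhoZ_le_load[OF f_meas S_int S_nonneg] lam_pos rho_lt1 by (meson less_imp_le le_less_trans)
  ultimately have "mono F"
    unfolding F_def by (rule mono_one_div_one_minus)
  moreover have "F 0 = 1"
    using f_supp unfolding F_def by (simp add: rhoZ_zero)
  moreover have "ETres p s z = integral {0..s} (\<lambda>a. F (worst_rank p s z a))" for p
    using known s_pos z_pos unfolding F_def by simp
  ultimately show ?thesis
    using integral_g_sz[of F] integral_h_sz[of F] g_sz_le_h_sz s_pos z_pos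
    unfolding F_def by simp
qed

end
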